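(* Let $G$ be a finite group and let $\{M_1,\dots,M_t\}$ be a maximal irredundant family of maximal subgroups of $G$. Then $\mathrm{core}_G(M_1\cap\dots\cap M_t)=\Phi(G)$, where $\Phi(G)$ is the Frattini subgroup of $G$ and $\mathrm{core}_G(X)$ is the largest normal subgroup of $G$ contained in $X$.
   Context: A set $\mathcal X$ of maximal subgroups of $G$ is irredundant if the intersection of the members of $\mathcal X$ is not equal to the intersection of the members of any proper subset of $\mathcal X$. An irredundant set is maximal irredundant if it is not properly contained in any other irredundant set of maximal subgroups of $G$. *)

theory Defs
  imports "HOL-Algebra.Algebra"
begin

definition maximal_subgroup :: "('a, 'b) monoid_scheme \<Rightarrow> 'a set \<Rightarrow> bool" where
  "maximal_subgroup G M \<longleftrightarrow> subgroup M G \<and> M \<noteq> carrier G \<and>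
     (\<forall>H. subgroup H G \<and> M \<subseteq> H \<longrightarrow> H = M \<or> H = carrier G)"

text \<open>Intersection of a family of subsets of G, the empty family giving G itself.\<close>
definition grp_Inter :: "('a, 'b) monoid_scheme \<Rightarrow> 'a set set \<Rightarrow> 'a set" where
  "grp_Inter G Ms = {x \<in> carrier G. \<forall>M\<in>Ms. x \<in> M}"

definition frattini :: "('a, 'b) monoid_scheme \<Rightarrow> 'a set" where
  "frattini G = grp_Inter G {M. maximal_subgroup G M}"

definition irredundant :: "('a, 'b) monoid_scheme \<Rightarrow> 'a set set \<Rightarrow> bool" where
  "irredundant G Ms \<longleftrightarrow> (\<forall>M\<in>Ms. maximal_subgroup G M) \<and>
     (\<forall>Ns. Ns \<subset> Ms \<longrightarrow> grp_Inter G Ns \<noteq> grp_Inter G Ms)"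

definition maximal_irredundant :: "('a, 'b) monoid_scheme \<Rightarrow> 'a set set \<Rightarrow> bool" where
  "maximal_irredundant G Ms \<longleftrightarrow> irredundant G Ms \<and>
     (\<forall>Ns. irredundant G Ns \<longrightarrow> \<not> Ms \<subset> Ns)"

definition is_core :: "('a, 'b) monoid_scheme \<Rightarrow> 'a set \<Rightarrow> 'a set \<Rightarrow> bool" where
  "is_core G S C \<longleftrightarrow> C \<lhd> G \<and> C \<subseteq> S \<and> (\<forall>N. N \<lhd> G \<and> N \<subseteq> S \<longrightarrow> N \<subseteq> C)"

end

theory Submission
  imports Defs
begin

text \<open>
  Conjugation permutes the maximal subgroups, so \<open>\<Phi>(G)\<close> is a normal subgroup contained in
  every maximal subgroup and hence in \<open>D = \<Inter>Ms\<close>. Conversely let \<open>N \<lhd> G\<close> with \<open>N \<subseteq> D\<close>,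
  and suppose \<open>N \<not>\<subseteq> M\<close> for some maximal \<open>M\<close>. Then \<open>NM = G\<close>, so \<open>DM = G\<close>. Writing
  a witness \<open>y\<close> of the irredundancy of \<open>K \<in> Ms\<close> as \<open>y = d m\<close> with \<open>d \<in> D\<close>, \<open>m \<in> M\<close>
  turns it into a witness \<open>m \<in> M\<close> for \<open>K\<close> in \<open>Ms \<union> {M}\<close>, while any element of \<open>D - M\<close>
  witnesses \<open>M\<close>. So \<open>Ms \<union> {M}\<close> is irredundant, and maximality of \<open>Ms\<close> forces \<open>M \<in> Ms\<close>,
  i.e. \<open>N \<subseteq> M\<close> after all.
\<close>

text \<open>The ASCII multiset syntax \<open><#\<close> would make left cosets \<open>g <# H\<close> ambiguous.\<close>
no_notation (ASCII) subset_mset (infix \<open><#\<close> 50)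

lemma grp_Inter_anti_mono: "Ns \<subseteq> Ms \<Longrightarrow> grp_Inter G Ms \<subseteq> grp_Inter G Ns"
  unfolding grp_Inter_def by auto

lemma grp_Inter_insert: "grp_Inter G (insert M Ms) = M \<inter> grp_Inter G Ms"
  unfolding grp_Inter_def by auto

lemma (in group) subgroup_grp_Inter:
  assumes "\<And>M. M \<in> Ms \<Longrightarrow> subgroup M G"
  shows "subgroup (grp_Inter G Ms) G"
  by (rule subgroup.intro) (auto simp: grp_Inter_def assms subgroup.m_closed subgroup.m_inv_closed
      subgroup.one_closed)

lemma maximal_subgroupI:
  assumes "subgroup M G" and "M \<noteq> carrier G"
    and "\<And>H. subgroup H G \<Longrightarrow> M \<subseteq> H \<Longrightarrow> H = M \<or> H = carrier G"
  shows "maximal_subgroup G M"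
  using assms unfolding maximal_subgroup_def by simp

lemma maximal_subgroupD:
  assumes "maximal_subgroup G M"
  shows "subgroup M G" and "M \<noteq> carrier G"
    and "\<And>H. subgroup H G \<Longrightarrow> M \<subseteq> H \<Longrightarrow> H = M \<or> H = carrier G"
  using assms unfolding maximal_subgroup_def by simp_all

lemma (in group) conjugate_memI:
  "h \<in> H \<Longrightarrow> g \<otimes> h \<otimes> inv g \<in> g <# H #> inv g"
  unfolding l_coset_def r_coset_def by blast

lemma (in group) conjugate_mono:
  "H \<subseteq> K \<Longrightarrow> g <# H #> inv g \<subseteq> g <# K #> inv g"
  unfolding l_coset_def r_coset_def by (intro UN_mono) auto

lemma (in group) conjugate_carrier:
  assumes g: "g \<in> carrier G"
  shows "g <# carrier G #> inv g = carrier G"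
proof
  show "g <# carrier G #> inv g \<subseteq> carrier G"
    by (rule r_coset_subset_G[OF l_coset_subset_G[OF subset_refl g] inv_closed[OF g]])
  show "carrier G \<subseteq> g <# carrier G #> inv g"
  proof
    fix x assume x: "x \<in> carrier G"
    have "g \<otimes> (inv g \<otimes> x \<otimes> g) \<otimes> inv g \<in> g <# carrier G #> inv g"
      using g x by (intro conjugate_memI) simp
    then show "x \<in> g <# carrier G #> inv g"
      unfolding conjugation_is_surj[OF g x] .
  qed
qed

lemma (in group) conjugate_inv_conjugate:
  assumes g: "g \<in> carrier G" and H: "H \<subseteq> carrier G"
  shows "inv g <# (g <# H #> inv g) #> g = H"
  using subgroup_conjugation_is_surj0[OF inv_closed[OF g] H] unfolding inv_inv[OF g] .

lemma (in group) maximal_subgroup_conjugate: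
  assumes g: "g \<in> carrier G" and M: "maximal_subgroup G M"
  shows "maximal_subgroup G (g <# M #> inv g)"
proof (rule maximal_subgroupI)
  note sub = maximal_subgroupD(1)[OF M]
  show "subgroup (g <# M #> inv g) G"
    by (rule subgroup_conjugation_is_surj2[OF g sub])
  have M_eq: "inv g <# (g <# M #> inv g) #> g = M"
    by (rule conjugate_inv_conjugate[OF g subgroup.subset[OF sub]])
  show "g <# M #> inv g \<noteq> carrier G"
  proof
    assume conj_M: "g <# M #> inv g = carrier G"
    have "M = inv g <# carrier G #> g" using M_eq unfolding conj_M by (rule sym)
    also have "\<dots> = carrier G"
      using conjugate_carrier[OF inv_closed[OF g]] unfolding inv_inv[OF g] .
    finally show False using maximal_subgroupD(2)[OF M] by contradiction
  qed
  fix H assume H: "subgroup H G" "g <# M #> inv g \<subseteq> H"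
  have "M \<subseteq> inv g <# H #> g"
    using conjugate_mono[OF H(2), of "inv g"] unfolding inv_inv[OF g] M_eq .
  then have "inv g <# H #> g = M \<or> inv g <# H #> g = carrier G"
    by (rule maximal_subgroupD(3)[OF M subgroup_conjugation_is_surj1[OF g H(1)]])
  moreover have H_eq: "H = g <# (inv g <# H #> g) #> inv g"
    using subgroup_conjugation_is_surj0[OF g subgroup.subset[OF H(1)]] by (rule sym)
  ultimately show "H = g <# M #> inv g \<or> H = carrier G"
  proof (elim disjE)
    assume conj_H: "inv g <# H #> g = M"
    show ?thesis using H_eq unfolding conj_H by (rule disjI1)
  next
    assume conj_H: "inv g <# H #> g = carrier G"
    show ?thesis using H_eq unfolding conj_H conjugate_carrier[OF g] by (rule disjI2)
  qed
qed

lemma (in group) normal_frattini: "frattini G \<lhd> G"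
proof (rule normal_invI)
  show "subgroup (frattini G) G"
    unfolding frattini_def by (rule subgroup_grp_Inter) (simp add: maximal_subgroupD(1))
next
  fix x h assume x: "x \<in> carrier G" and h: "h \<in> frattini G"
  have "x \<otimes> h \<otimes> inv x \<in> M" if M: "maximal_subgroup G M" for M
  proof -
    have "maximal_subgroup G (inv x <# M #> x)"
      using maximal_subgroup_conjugate[OF inv_closed[OF x] M] unfolding inv_inv[OF x] .
    then have "h \<in> inv x <# M #> x"
      using h unfolding frattini_def grp_Inter_def by blast
    then have "x \<otimes> h \<otimes> inv x \<in> x <# (inv x <# M #> x) #> inv x"
      by (rule conjugate_memI)
    then show ?thesis
      unfolding subgroup_conjugation_is_surj0[OF x subgroup.subset[OF maximal_subgroupD(1)[OF M]]] .
  qed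
  then show "x \<otimes> h \<otimes> inv x \<in> frattini G"
    using x h unfolding frattini_def grp_Inter_def by auto
qed

lemma irredundant_iff:
  "irredundant G Ms \<longleftrightarrow>
     (\<forall>M\<in>Ms. maximal_subgroup G M) \<and> (\<forall>K\<in>Ms. \<not> grp_Inter G (Ms - {K}) \<subseteq> K)"
proof -
  have "(\<forall>Ns. Ns \<subset> Ms \<longrightarrow> grp_Inter G Ns \<noteq> grp_Inter G Ms) \<longleftrightarrow>
        (\<forall>K\<in>Ms. \<not> grp_Inter G (Ms - {K}) \<subseteq> K)"
  proof
    assume irr: "\<forall>Ns. Ns \<subset> Ms \<longrightarrow> grp_Inter G Ns \<noteq> grp_Inter G Ms"
    show "\<forall>K\<in>Ms. \<not> grp_Inter G (Ms - {K}) \<subseteq> K"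
    proof (intro ballI notI)
      fix K assume "K \<in> Ms" and "grp_Inter G (Ms - {K}) \<subseteq> K"
      then have "grp_Inter G (Ms - {K}) = grp_Inter G Ms"
        using grp_Inter_insert[of G K "Ms - {K}"] by (simp add: insert_absorb Int_absorb1)
      moreover have "Ms - {K} \<subset> Ms" using \<open>K \<in> Ms\<close> by blast
      ultimately show False using irr by blast
    qed
  next
    assume witness: "\<forall>K\<in>Ms. \<not> grp_Inter G (Ms - {K}) \<subseteq> K"
    show "\<forall>Ns. Ns \<subset> Ms \<longrightarrow> grp_Inter G Ns \<noteq> grp_Inter G Ms"
    proof (intro allI impI)
      fix Ns assume "Ns \<subset> Ms"
      then obtain K where "K \<in> Ms" "Ns \<subseteq> Ms - {K}" by blast
      then have "\<not> grp_Inter G Ns \<subseteq> K"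
        using witness grp_Inter_anti_mono[of Ns "Ms - {K}" G] by blast
      moreover have "grp_Inter G Ms \<subseteq> K"
        using \<open>K \<in> Ms\<close> unfolding grp_Inter_def by auto
      ultimately show "grp_Inter G Ns \<noteq> grp_Inter G Ms" by blast
    qed
  qed
  then show ?thesis unfolding irredundant_def by blast
qed

lemma (in group) irredundant_insert:
  assumes Ms: "irredundant G Ms" and M: "maximal_subgroup G M"
    and supplement: "grp_Inter G Ms <#> M = carrier G"
  shows "irredundant G (insert M Ms)"
proof -
  let ?D = "grp_Inter G Ms"
  have maximal: "\<forall>K\<in>Ms. maximal_subgroup G K"
    and witness: "\<forall>K\<in>Ms. \<not> grp_Inter G (Ms - {K}) \<subseteq> K"
    using Ms unfolding irredundant_iff by auto
  have sub_Inter: "subgroup (grp_Inter G Ns) G" if "Ns \<subseteq> Ms" for Ns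
    using that maximal by (intro subgroup_grp_Inter) (auto dest: maximal_subgroupD(1))
  have sub_M: "subgroup M G" by (rule maximal_subgroupD(1)[OF M])
  have D_not_M: "\<not> ?D \<subseteq> M"
  proof
    assume "?D \<subseteq> M"
    then have "?D <#> M \<subseteq> M <#> M" by (rule mono_set_mult) (rule subset_refl)
    then have "carrier G \<subseteq> M" unfolding supplement subgroup_mult_id[OF sub_M] .
    then show False
      using maximal_subgroupD(2)[OF M] subgroup.subset[OF sub_M] by blast
  qed
  then have "M \<notin> Ms" unfolding grp_Inter_def by blast
  have "\<not> grp_Inter G (insert M Ms - {K}) \<subseteq> K" if K: "K \<in> insert M Ms" for K
  proof (cases "K = M")
    case True
    then have "insert M Ms - {K} = Ms" using \<open>M \<notin> Ms\<close> by auto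
    then show ?thesis using D_not_M True by simp
  next
    case False
    then have "K \<in> Ms" using K by simp
    then have sub_K: "subgroup K G" using maximal maximal_subgroupD(1) by blast
    obtain y where y: "y \<in> grp_Inter G (Ms - {K})" "y \<notin> K"
      using witness \<open>K \<in> Ms\<close> by blast
    then have "y \<in> carrier G" unfolding grp_Inter_def by simp
    then have "y \<in> ?D <#> M" unfolding supplement .
    then obtain d m where d: "d \<in> ?D" and m: "m \<in> M" and y_eq: "y = d \<otimes> m"
      unfolding set_mult_def by blast
    have d_carrier: "d \<in> carrier G" and m_carrier: "m \<in> carrier G"
      using d m subgroup.mem_carrier[OF sub_M] unfolding grp_Inter_def by auto
    have "inv d \<in> grp_Inter G (Ms - {K})"
      using subgroup.m_inv_closed[OF sub_Inter[OF subset_refl] d]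
        grp_Inter_anti_mono[of "Ms - {K}" Ms G] by blast
    then have "inv d \<otimes> y \<in> grp_Inter G (Ms - {K})"
      by (rule subgroup.m_closed[OF sub_Inter[OF Diff_subset] _ y(1)])
    moreover have "inv d \<otimes> y = m"
      unfolding y_eq using d_carrier m_carrier by (simp add: m_assoc[symmetric])
    ultimately have "m \<in> grp_Inter G (insert M Ms - {K})"
      using m False grp_Inter_insert[of G M "Ms - {K}"] by (simp add: insert_Diff_if)
    moreover have "m \<notin> K"
    proof
      assume "m \<in> K"
      moreover have "d \<in> K" using d \<open>K \<in> Ms\<close> unfolding grp_Inter_def by blast
      ultimately have "y \<in> K" unfolding y_eq using subgroup.m_closed[OF sub_K] by blast
      then show False using y(2) by contradiction
    qed
    ultimately show ?thesis by blast
  qed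
  moreover have "\<forall>K\<in>insert M Ms. maximal_subgroup G K" using maximal M by simp
  ultimately show ?thesis unfolding irredundant_iff by blast
qed

lemma (in group) normal_mult_maximal_subgroup_eq_carrier:
  assumes N: "N \<lhd> G" and M: "maximal_subgroup G M" and N_not_M: "\<not> N \<subseteq> M"
  shows "N <#> M = carrier G"
proof -
  have sub_N: "subgroup N G" and sub_M: "subgroup M G"
    using normal_imp_subgroup[OF N] maximal_subgroupD(1)[OF M] .
  have "M \<subseteq> N <#> M"
  proof
    fix m assume m: "m \<in> M"
    then have "\<one> \<otimes> m \<in> N <#> M"
      using subgroup.one_closed[OF sub_N] unfolding set_mult_def by blast
    then show "m \<in> N <#> M" using subgroup.mem_carrier[OF sub_M m] by simp
  qed
  moreover have "N \<subseteq> N <#> M"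
  proof
    fix n assume n: "n \<in> N"
    then have "n \<otimes> \<one> \<in> N <#> M"
      using subgroup.one_closed[OF sub_M] unfolding set_mult_def by blast
    then show "n \<in> N <#> M" using subgroup.mem_carrier[OF sub_N n] by simp
  qed
  ultimately show ?thesis
    using maximal_subgroupD(3)[OF M mult_norm_subgroup[OF N sub_M]] N_not_M by blast
qed

lemma (in group) normal_subset_frattini:
  assumes Ms: "maximal_irredundant G Ms"
    and N: "N \<lhd> G" and N_sub: "N \<subseteq> grp_Inter G Ms"
  shows "N \<subseteq> frattini G"
proof -
  have irr: "irredundant G Ms" and no_ext: "\<And>Ns. irredundant G Ns \<Longrightarrow> \<not> Ms \<subset> Ns"
    using Ms unfolding maximal_irredundant_def by auto
  have "N \<subseteq> M" if M: "maximal_subgroup G M" for M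
  proof (rule ccontr)
    assume "\<not> N \<subseteq> M"
    then have "N <#> M = carrier G" by (rule normal_mult_maximal_subgroup_eq_carrier[OF N M])
    then have "carrier G \<subseteq> grp_Inter G Ms <#> M"
      using mono_set_mult[OF N_sub subset_refl, of G M] by simp
    moreover have "grp_Inter G Ms <#> M \<subseteq> carrier G"
      using subgroup.subset[OF maximal_subgroupD(1)[OF M]]
      by (intro setmult_subset_G) (auto simp: grp_Inter_def)
    ultimately have "irredundant G (insert M Ms)"
      by (intro irredundant_insert[OF irr M]) (rule equalityI)
    then have "M \<in> Ms" using no_ext by blast
    then have "grp_Inter G Ms \<subseteq> M" unfolding grp_Inter_def by blast
    with \<open>\<not> N \<subseteq> M\<close> N_sub show False by blast
  qed
  moreover have "N \<subseteq> carrier G" using subgroup.subset[OF normal_imp_subgroup[OF N]] .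
  ultimately show ?thesis unfolding frattini_def grp_Inter_def by blast
qed

theorem mainTheorem2:
  fixes G (structure) and Ms :: "'a set set"
  assumes "group G" and "finite (carrier G)"
    and "maximal_irredundant G Ms"
  shows "is_core G (grp_Inter G Ms) (frattini G)"
proof -
  interpret group G by fact
  have "Ms \<subseteq> {M. maximal_subgroup G M}"
    using assms(3) unfolding maximal_irredundant_def irredundant_iff by auto
  then have "frattini G \<subseteq> grp_Inter G Ms"
    unfolding frattini_def by (rule grp_Inter_anti_mono)
  then show ?thesis
    unfolding is_core_def using normal_frattini normal_subset_frattini[OF assms(3)] by simp
qed

end
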